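(* The vector fields of the central system pairwise commute: for all $j,k\ge1$, $[X_j,X_k]=0$ on $\mathcal H$, i.e. for every $i\ge0$, $$\frac{\partial}{\partial t_j}\Big(\frac{\partial H^{(i)}}{\partial t_k}\Big)=\frac{\partial}{\partial t_k}\Big(\frac{\partial H^{(i)}}{\partial t_j}\Big),$$ where the derivative along $X_j$ of the components of $X_k$ (which are polynomials in the coordinates $H^a_l$) is computed by the chain rule.
   Context: Let $z$ be a formal variable and $\mathcal L$ the space of formal Laurent series $\sum_{j\le N} l_j z^j$ (finitely many positive powers of $z$). Let $\mathcal H$ be the set of sequences $H=(H^{(k)})_{k\ge0}$ of elements of $\mathcal L$ with $H^{(0)}=1$ and, for $k\ge1$, $H^{(k)}=z^k+\sum_{l\ge1}H^k_l z^{-l}$; the coefficients $H^k_l$ are coordinates on $\mathcal H$, and we set $H^0_l=0$. The central system (CS) is the family of vector fields $X_j$, $j\ge1$, on $\mathcal H$, with associated times $t_j$, defined by $$\frac{\partial H^{(k)}}{\partial t_j}=H^{(j+k)}-H^{(j)}H^{(k)}+\sum_{l=1}^{k}H^j_lH^{(k-l)}+\sum_{l=1}^{j}H^k_lH^{(j-l)},\qquad k\ge0;$$ the right-hand side contains only negative powers of $z$, so this determines the components $X_j(H^k_l)$. *)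

theory Defs
  imports Complex_Main
begin

text \<open>A point of the space H is given by its coordinates H a l (a \<ge> 1, l \<ge> 1),
 stored as a function nat => nat => real; entries with a = 0 or l = 0 are ignored
 (convention H^0_l = 0).\<close>

type_synonym cs_point = "nat \<Rightarrow> nat \<Rightarrow> real"

definition coord :: "cs_point \<Rightarrow> nat \<Rightarrow> nat \<Rightarrow> real" where
  "coord H a l = (if a = 0 \<or> l = 0 then 0 else H a l)"

text \<open>Coefficient of z^n in the Laurent series H^(a):
 H^(0) = 1,  H^(a) = z^a + sum_{l>=1} H^a_l z^(-l).\<close>
definition hc :: "cs_point \<Rightarrow> nat \<Rightarrow> int \<Rightarrow> real" where
  "hc H a n = (if n = int a then 1 else if n < 0 then coord H a (nat (- n)) else 0)"

definition prodc :: "cs_point \<Rightarrow> nat \<Rightarrow> nat \<Rightarrow> int \<Rightarrow> real" where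
  "prodc H a b n = (\<Sum>p\<in>{n - int b..int a}. hc H a p * hc H b (n - p))"

text \<open>Component X_j(H^k_m) of the central system vector field: the coefficient of z^(-m)
 of H^(j+k) - H^(j) H^(k) + sum_{l=1}^k H^j_l H^(k-l) + sum_{l=1}^j H^k_l H^(j-l).\<close>
definition CS_field :: "nat \<Rightarrow> cs_point \<Rightarrow> nat \<Rightarrow> nat \<Rightarrow> real" where
  "CS_field j H k m =
     hc H (j + k) (- int m) - prodc H j k (- int m)
     + (\<Sum>l=1..k. coord H j l * hc H (k - l) (- int m))
     + (\<Sum>l=1..j. coord H k l * hc H (j - l) (- int m))"

text \<open>Since G depends polynomially on finitely many coordinates this is the
 chain-rule derivative sum_{a,l} dG/dH^a_l * X_j(H^a_l).\<close>
definition lie_deriv :: "nat \<Rightarrow> (cs_point \<Rightarrow> real) \<Rightarrow> cs_point \<Rightarrow> real \<Rightarrow> bool" where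
  "lie_deriv j G H D \<longleftrightarrow>
     ((\<lambda>\<epsilon>. G (\<lambda>a l. H a l + \<epsilon> * CS_field j H a l)) has_real_derivative D) (at 0)"

end

theory Submission
  imports Defs "HOL-Computational_Algebra.Formal_Laurent_Series"
begin

text \<open>Write R(j,a) = H^(j+a) + sum_l H^j_l H^(a-l) + sum_l H^a_l H^(j-l), a linear combination
  of the series H^(n) with scalar coefficients, symmetric in j and a; then
  X_j H^(a) = R(j,a) - H^(j) H^(a).  Differentiating X_k H^(i) along X_j by the product rule
  and substituting this formula for every X_j H^(a) that appears gives a linear combination of
  the H^(n) plus -H^(j) R(k,i) - R(j,k) H^(i) - H^(k) R(j,i) + 2 H^(i) H^(j) H^(k), which is
  symmetric in j and k.  So [X_j, X_k] H^(i) is a linear combination of the H^(n).  It also has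
  only negative powers of z, whereas the nonzero combination sum_n c_n H^(n) has the term
  c_N z^N with N \<ge> 0 the largest index with c_N \<noteq> 0.  Hence it vanishes.\<close>

unbundle fps_syntax

section \<open>The series H^(a)\<close>

text \<open>Laurent series are taken in w = 1/z: the coefficient of w^n is that of z^(-n), so that
  finitely many positive powers of z become the finitely many negative powers allowed in an
  \<^typ>\<open>real fls\<close>.\<close>

definition cs_series :: "cs_point \<Rightarrow> nat \<Rightarrow> real fls" where
  "cs_series H a = Abs_fls (\<lambda>n. hc H a (- n))"

definition tail_series :: "(nat \<Rightarrow> real) \<Rightarrow> real fls" where
  "tail_series c = Abs_fls (\<lambda>n. if n > 0 then c (nat n) else 0)"

lemma cs_series_nth: "cs_series H a $$ n = hc H a (- n)"
  unfolding cs_series_def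
  by (rule nth_Abs_fls_lower_bound[of "- int a"]) (auto simp: hc_def)

lemma tail_series_nth: "tail_series c $$ n = (if n > 0 then c (nat n) else 0)"
  unfolding tail_series_def
  by (rule nth_Abs_fls_lower_bound[of 0]) auto

lemma cs_series_nth_nonpos: "n \<le> 0 \<Longrightarrow> cs_series H a $$ n = (if n = - int a then 1 else 0)"
  by (auto simp: cs_series_nth hc_def)

lemma cs_series_0: "cs_series H 0 = 1"
  by (rule fls_eqI) (auto simp: cs_series_nth hc_def coord_def)

lemma cs_series_eq_X_intpow_plus_tail:
  "cs_series H a = fls_X_intpow (- int a) + tail_series (coord H a)"
  by (rule fls_eqI) (auto simp: cs_series_nth tail_series_nth hc_def coord_def)

lemma fls_times_nth_bounded:
  fixes f g :: "'a::{comm_monoid_add, times, mult_zero} fls"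
  assumes "\<And>i. i < a \<Longrightarrow> f $$ i = 0" and "\<And>i. i < b \<Longrightarrow> g $$ i = 0"
  shows "(f * g) $$ n = (\<Sum>i=a..n-b. f $$ i * g $$ (n - i))"
proof (cases "f = 0 \<or> g = 0")
  case True
  then show ?thesis by auto
next
  case False
  then have "a \<le> fls_subdegree f" and "b \<le> fls_subdegree g"
    using assms by (auto intro: fls_subdegree_geI)
  then have "(\<Sum>i=fls_subdegree f..n - fls_subdegree g. f $$ i * g $$ (n - i))
      = (\<Sum>i=a..n-b. f $$ i * g $$ (n - i))"
    by (intro sum.mono_neutral_left) auto
  then show ?thesis by (simp add: fls_times_nth(2))
qed

lemma prodc_eq_fls_times_nth: "prodc H a b n = (cs_series H a * cs_series H b) $$ (- n)"
proof -
  have "(cs_series H a * cs_series H b) $$ (- n)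
      = (\<Sum>i = - int a.. - n - (- int b). cs_series H a $$ i * cs_series H b $$ (- n - i))"
    by (rule fls_times_nth_bounded) (auto simp: cs_series_nth hc_def)
  also have "\<dots> = prodc H a b n"
    unfolding prodc_def
    by (rule sum.reindex_bij_witness[of _ uminus uminus]) (auto simp: cs_series_nth add.commute)
  finally show ?thesis by simp
qed

lemma tail_series_times_nth_le_1: "n \<le> 1 \<Longrightarrow> (tail_series c * tail_series d) $$ n = 0"
  by (subst fls_times_nth_bounded[of 1 _ 1]) (auto simp: tail_series_nth)

lemma cs_series_times_nth_nonpos:
  assumes "n \<le> 0"
  shows "(cs_series H a * cs_series H b) $$ n = (if n = - int (a + b) then 1 else 0)
      + tail_series (coord H b) $$ (n + int a) + tail_series (coord H a) $$ (n + int b)"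
proof -
  have "cs_series H a * cs_series H b = fls_X_intpow (- int a) * fls_X_intpow (- int b)
      + fls_X_intpow (- int a) * tail_series (coord H b)
      + fls_X_intpow (- int b) * tail_series (coord H a)
      + tail_series (coord H a) * tail_series (coord H b)"
    by (simp add: cs_series_eq_X_intpow_plus_tail algebra_simps)
  also have "\<dots> = fls_X_intpow (- int a - int b) + fls_shift (int a) (tail_series (coord H b))
      + fls_shift (int b) (tail_series (coord H a)) + tail_series (coord H a) * tail_series (coord H b)"
    using fls_X_intpow_times_fls_X_intpow[of "- int a" "- int b", where 'a=real]
      fls_X_intpow_times_conv_shift(1)[of "- int a" "tail_series (coord H b)"]
      fls_X_intpow_times_conv_shift(1)[of "- int b" "tail_series (coord H a)"]
    by (simp add: algebra_simps)
  finally show ?thesis using assms by (simp add: tail_series_times_nth_le_1)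
qed

lemma sum_times_indicator_eq_tail_series_nth:
  fixes n :: int
  assumes "n \<le> 0"
  shows "(\<Sum>l=1..a. c l * (if n = int l - int a then 1 else 0)) = tail_series c $$ (n + int a)"
proof (cases "n + int a > 0")
  case True
  define l0 where "l0 = nat (n + int a)"
  have "l0 \<in> {1..a}"
    using True assms unfolding l0_def by auto
  have "(\<Sum>l=1..a. c l * (if n = int l - int a then 1 else 0)) = (\<Sum>l=1..a. if l = l0 then c l else 0)"
    by (intro sum.cong) (auto simp: l0_def)
  also have "\<dots> = c l0"
    using \<open>l0 \<in> {1..a}\<close> by simp
  finally show ?thesis using True by (simp add: tail_series_nth l0_def)
next
  case False
  then show ?thesis by (auto simp: tail_series_nth intro: sum.neutral)
qed

definition cs_field_series :: "nat \<Rightarrow> cs_point \<Rightarrow> nat \<Rightarrow> real fls" where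
  "cs_field_series j H k = cs_series H (j + k) - cs_series H j * cs_series H k
     + (\<Sum>l=1..k. fls_const (coord H j l) * cs_series H (k - l))
     + (\<Sum>l=1..j. fls_const (coord H k l) * cs_series H (j - l))"

lemma CS_field_eq_nth: "CS_field j H k m = cs_field_series j H k $$ int m"
  unfolding CS_field_def cs_field_series_def
  by (simp add: fls_nth_sum cs_series_nth prodc_eq_fls_times_nth)

lemma cs_field_series_nth_nonpos:
  assumes "n \<le> 0"
  shows "cs_field_series j H k $$ n = 0"
  using sum_times_indicator_eq_tail_series_nth[OF assms, of "coord H j" k]
    sum_times_indicator_eq_tail_series_nth[OF assms, of "coord H k" j] assms
  unfolding cs_field_series_def
  by (simp add: fls_nth_sum cs_series_nth_nonpos cs_series_times_nth_nonpos)

lemma cs_field_series_0: "cs_field_series j H 0 = 0"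
  unfolding cs_field_series_def by (simp add: cs_series_0 coord_def)

lemma tail_series_coord_CS_field: "tail_series (coord (CS_field j H) a) = cs_field_series j H a"
proof (rule fls_eqI)
  fix n
  show "tail_series (coord (CS_field j H) a) $$ n = cs_field_series j H a $$ n"
    by (cases "n > 0")
      (auto simp: tail_series_nth coord_def CS_field_eq_nth cs_field_series_0
        cs_field_series_nth_nonpos)
qed

section \<open>Linear combinations of the H^(n)\<close>

text \<open>Since cs_series H n has the coefficient 1 at w^(-n) and 0 at all other w^(-m), m \<ge> 0,
  the coefficients of a finite combination of the cs_series H n are forced; building them into
  the predicate makes it closed under linear combinations without extra bookkeeping.\<close>

definition in_cs_span :: "cs_point \<Rightarrow> real fls \<Rightarrow> bool" where
  "in_cs_span H g \<longleftrightarrow>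
     (\<forall>\<^sub>F N in sequentially. g = (\<Sum>n<N. fls_const (g $$ - int n) * cs_series H n))"

lemma in_cs_span_cs_series: "in_cs_span H (cs_series H a)"
  unfolding in_cs_span_def eventually_sequentially
proof (intro exI allI impI)
  fix N assume "N \<ge> Suc a"
  have "(\<Sum>n<N. fls_const (cs_series H a $$ - int n) * cs_series H n)
      = (\<Sum>n<N. if n = a then cs_series H a else 0)"
    by (intro sum.cong) (auto simp: cs_series_nth hc_def)
  also have "\<dots> = cs_series H a"
    using \<open>N \<ge> Suc a\<close> by simp
  finally show "cs_series H a = (\<Sum>n<N. fls_const (cs_series H a $$ - int n) * cs_series H n)" ..
qed

lemma in_cs_span_0: "in_cs_span H 0"
  unfolding in_cs_span_def by simp

lemma in_cs_span_add:
  assumes "in_cs_span H f" and "in_cs_span H g"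
  shows "in_cs_span H (f + g)"
proof -
  have expansion_add: "(\<Sum>n<N. fls_const ((f + g) $$ - int n) * cs_series H n)
      = (\<Sum>n<N. fls_const (f $$ - int n) * cs_series H n)
        + (\<Sum>n<N. fls_const (g $$ - int n) * cs_series H n)" for N
    by (simp add: sum.distrib distrib_right fls_plus_const[symmetric])
  show ?thesis
    using eventually_conj[OF assms[unfolded in_cs_span_def]]
    unfolding in_cs_span_def expansion_add
    by eventually_elim (elim conjE, rule arg_cong2[where f = "(+)"])
qed

lemma in_cs_span_const_mult:
  assumes "in_cs_span H g"
  shows "in_cs_span H (fls_const c * g)"
proof -
  have expansion_const_mult: "(\<Sum>n<N. fls_const ((fls_const c * g) $$ - int n) * cs_series H n)
      = fls_const c * (\<Sum>n<N. fls_const (g $$ - int n) * cs_series H n)" for N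
    by (simp add: sum_distrib_left mult.assoc flip: fls_const_mult_const)
  show ?thesis
    using assms unfolding in_cs_span_def expansion_const_mult
    by eventually_elim (rule arg_cong[where f = "(*) (fls_const c)"])
qed

lemma in_cs_span_diff:
  assumes "in_cs_span H f" and "in_cs_span H g"
  shows "in_cs_span H (f - g)"
  using in_cs_span_add[OF assms(1) in_cs_span_const_mult[OF assms(2), of "-1"]] by simp

lemma in_cs_span_sum:
  "finite A \<Longrightarrow> (\<And>x. x \<in> A \<Longrightarrow> in_cs_span H (f x)) \<Longrightarrow> in_cs_span H (\<Sum>x\<in>A. f x)"
  by (induction A rule: finite_induct) (auto intro: in_cs_span_0 in_cs_span_add)

lemma in_cs_span_eq_0:
  assumes "in_cs_span H g" and "\<And>n. n \<le> 0 \<Longrightarrow> g $$ n = 0"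
  shows "g = 0"
proof -
  obtain N where "g = (\<Sum>n<N. fls_const (g $$ - int n) * cs_series H n)"
    using assms(1) unfolding in_cs_span_def eventually_sequentially by blast
  also have "\<dots> = 0"
    using assms(2) by simp
  finally show ?thesis .
qed

section \<open>Derivatives along X_j\<close>

definition cs_field_first_variation :: "nat \<Rightarrow> cs_point \<Rightarrow> cs_point \<Rightarrow> nat \<Rightarrow> real fls" where
  "cs_field_first_variation k H V i =
     tail_series (coord V (k + i))
     - (tail_series (coord V k) * cs_series H i + cs_series H k * tail_series (coord V i))
     + (\<Sum>l=1..i. fls_const (coord V k l) * cs_series H (i - l)
          + fls_const (coord H k l) * tail_series (coord V (i - l)))
     + (\<Sum>l=1..k. fls_const (coord V i l) * cs_series H (k - l)
          + fls_const (coord H i l) * tail_series (coord V (k - l)))"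

definition cs_field_second_variation :: "nat \<Rightarrow> cs_point \<Rightarrow> nat \<Rightarrow> real fls" where
  "cs_field_second_variation k V i =
     - (tail_series (coord V k) * tail_series (coord V i))
     + (\<Sum>l=1..i. fls_const (coord V k l) * tail_series (coord V (i - l)))
     + (\<Sum>l=1..k. fls_const (coord V i l) * tail_series (coord V (k - l)))"

lemma field_expression_perturbation:
  fixes A W :: "nat \<Rightarrow> 'r::comm_ring_1" and c v :: "nat \<Rightarrow> nat \<Rightarrow> 'r" and e :: 'r
  shows "(A (k + i) + e * W (k + i)) - (A k + e * W k) * (A i + e * W i)
      + (\<Sum>l=1..i. (c k l + e * v k l) * (A (i - l) + e * W (i - l)))
      + (\<Sum>l=1..k. (c i l + e * v i l) * (A (k - l) + e * W (k - l)))
    = (A (k + i) - A k * A i + (\<Sum>l=1..i. c k l * A (i - l)) + (\<Sum>l=1..k. c i l * A (k - l)))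
      + e * (W (k + i) - (W k * A i + A k * W i)
          + (\<Sum>l=1..i. v k l * A (i - l) + c k l * W (i - l))
          + (\<Sum>l=1..k. v i l * A (k - l) + c i l * W (k - l)))
      + e ^ 2 * (- (W k * W i) + (\<Sum>l=1..i. v k l * W (i - l)) + (\<Sum>l=1..k. v i l * W (k - l)))"
  by (simp add: algebra_simps sum.distrib sum_distrib_left power2_eq_square)

lemma cs_series_perturb:
  "cs_series (\<lambda>a l. H a l + e * V a l) a = cs_series H a + fls_const e * tail_series (coord V a)"
  by (rule fls_eqI) (auto simp: cs_series_nth tail_series_nth hc_def coord_def)

lemma coord_perturb: "coord (\<lambda>a l. H a l + e * V a l) a l = coord H a l + e * coord V a l"
  by (simp add: coord_def)

lemma cs_field_series_perturb:
  "cs_field_series k (\<lambda>a l. H a l + e * V a l) i = cs_field_series k H i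
     + fls_const e * cs_field_first_variation k H V i + fls_const e ^ 2 * cs_field_second_variation k V i"
proof -
  have fls_const_perturb: "fls_const (x + e * y) = fls_const x + fls_const e * fls_const y" for x y
    by (simp add: fls_plus_const)
  show ?thesis
    unfolding cs_field_series_def cs_series_perturb coord_perturb fls_const_perturb
      cs_field_first_variation_def cs_field_second_variation_def
    by (rule field_expression_perturbation)
qed

lemma CS_field_perturb:
  "CS_field k (\<lambda>a l. H a l + e * V a l) i m = cs_field_series k H i $$ int m
     + e * cs_field_first_variation k H V i $$ int m + e ^ 2 * cs_field_second_variation k V i $$ int m"
  by (simp add: CS_field_eq_nth cs_field_series_perturb flip: fls_const_power)

lemma lie_deriv_CS_field:
  "lie_deriv j (\<lambda>H'. CS_field k H' i m) H (cs_field_first_variation k H (CS_field j H) i $$ int m)"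
  unfolding lie_deriv_def CS_field_perturb by (auto intro!: derivative_eq_intros)

text \<open>The perturbed point H + eV is again a point of the space, so the vanishing of the
  nonpositive coefficients holds identically in e, in particular for its linear part.\<close>

lemma cs_field_first_variation_nth_nonpos:
  assumes "n \<le> 0"
  shows "cs_field_first_variation k H V i $$ n = 0"
proof -
  have "cs_field_series k H i $$ n + e * cs_field_first_variation k H V i $$ n
      + e ^ 2 * cs_field_second_variation k V i $$ n = 0" for e
    using cs_field_series_nth_nonpos[OF assms, of k "\<lambda>a l. H a l + e * V a l" i]
    by (simp add: cs_field_series_perturb flip: fls_const_power)
  from this[of 1] this[of "-1"] show ?thesis by simp
qed

definition cs_linear_part :: "cs_point \<Rightarrow> nat \<Rightarrow> nat \<Rightarrow> real fls" where
  "cs_linear_part H a b = cs_series H (a + b)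
     + (\<Sum>l=1..b. fls_const (coord H a l) * cs_series H (b - l))
     + (\<Sum>l=1..a. fls_const (coord H b l) * cs_series H (a - l))"

lemma cs_linear_part_commute: "cs_linear_part H a b = cs_linear_part H b a"
  unfolding cs_linear_part_def by (simp add: algebra_simps)

lemma in_cs_span_cs_linear_part: "in_cs_span H (cs_linear_part H a b)"
  unfolding cs_linear_part_def
  by (intro in_cs_span_add in_cs_span_cs_series in_cs_span_sum in_cs_span_const_mult) auto

lemma cs_field_series_eq_linear_part:
  "cs_field_series a H b = cs_linear_part H a b - cs_series H a * cs_series H b"
  unfolding cs_field_series_def cs_linear_part_def by (simp add: algebra_simps)

definition cs_variation_linear_part :: "cs_point \<Rightarrow> nat \<Rightarrow> nat \<Rightarrow> nat \<Rightarrow> real fls" where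
  "cs_variation_linear_part H j k i = cs_linear_part H j (k + i)
     + (\<Sum>l=1..i. fls_const (coord (CS_field j H) k l) * cs_series H (i - l)
          + fls_const (coord H k l) * cs_linear_part H j (i - l))
     + (\<Sum>l=1..k. fls_const (coord (CS_field j H) i l) * cs_series H (k - l)
          + fls_const (coord H i l) * cs_linear_part H j (k - l))"

lemma in_cs_span_cs_variation_linear_part: "in_cs_span H (cs_variation_linear_part H j k i)"
  unfolding cs_variation_linear_part_def
  by (intro in_cs_span_add in_cs_span_cs_series in_cs_span_sum in_cs_span_const_mult
      in_cs_span_cs_linear_part) auto

lemma first_variation_substitution:
  fixes A :: "nat \<Rightarrow> 'r::comm_ring_1" and R c v :: "nat \<Rightarrow> nat \<Rightarrow> 'r"
  assumes "R k i = A (k + i) + (\<Sum>l=1..i. c k l * A (i - l)) + (\<Sum>l=1..k. c i l * A (k - l))"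
  shows "(R j (k + i) - A j * A (k + i)) - ((R j k - A j * A k) * A i + A k * (R j i - A j * A i))
      + (\<Sum>l=1..i. v k l * A (i - l) + c k l * (R j (i - l) - A j * A (i - l)))
      + (\<Sum>l=1..k. v i l * A (k - l) + c i l * (R j (k - l) - A j * A (k - l)))
    = (R j (k + i) + (\<Sum>l=1..i. v k l * A (i - l) + c k l * R j (i - l))
        + (\<Sum>l=1..k. v i l * A (k - l) + c i l * R j (k - l)))
      - A j * R k i - R j k * A i - A k * R j i + 2 * A i * A j * A k"
  unfolding assms
  by (simp add: algebra_simps sum.distrib sum_subtractf sum_distrib_left)

lemma cs_field_first_variation_along_field:
  "cs_field_first_variation k H (CS_field j H) i = cs_variation_linear_part H j k i
     - cs_series H j * cs_linear_part H k i - cs_linear_part H j k * cs_series H i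
     - cs_series H k * cs_linear_part H j i + 2 * cs_series H i * cs_series H j * cs_series H k"
  unfolding cs_field_first_variation_def tail_series_coord_CS_field cs_field_series_eq_linear_part
    cs_variation_linear_part_def
  by (rule first_variation_substitution[where c = "\<lambda>a l. fls_const (coord H a l)"])
    (simp add: cs_linear_part_def)

lemma cs_field_first_variation_commute:
  "cs_field_first_variation k H (CS_field j H) i = cs_field_first_variation j H (CS_field k H) i"
proof -
  let ?D = "cs_field_first_variation k H (CS_field j H) i - cs_field_first_variation j H (CS_field k H) i"
  have "?D = cs_variation_linear_part H j k i - cs_variation_linear_part H k j i"
    unfolding cs_field_first_variation_along_field
    using cs_linear_part_commute[of H j k] cs_linear_part_commute[of H k i]
      cs_linear_part_commute[of H j i]
    by (simp add: algebra_simps)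
  then have "in_cs_span H ?D"
    by (simp add: in_cs_span_diff in_cs_span_cs_variation_linear_part)
  moreover have "?D $$ n = 0" if "n \<le> 0" for n
    using that by (simp add: cs_field_first_variation_nth_nonpos)
  ultimately have "?D = 0"
    by (rule in_cs_span_eq_0)
  then show ?thesis by simp
qed

theorem mainTheorem4:
  fixes j k i m :: nat and H :: cs_point
  assumes "j \<ge> 1" and "k \<ge> 1" and "m \<ge> 1"
  shows "\<exists>D. lie_deriv j (\<lambda>H'. CS_field k H' i m) H D
            \<and> lie_deriv k (\<lambda>H'. CS_field j H' i m) H D"
  using lie_deriv_CS_field[of j k i m H] lie_deriv_CS_field[of k j i m H]
  unfolding cs_field_first_variation_commute[of k H j i] by blast

end
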